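(* Let $T\in S(\lambda)$ be any standard Young tableau. Then $\chi^T(q)=\sum_k|S_k^T(\lambda)|q^k$ is log-concave, i.e. $|S_k^T(\lambda)|^2\ge|S_{k-1}^T(\lambda)|\,|S_{k+1}^T(\lambda)|$ for all $k\ge1$.
   Context: A shape $\lambda=(\lambda_1\ge\dots\ge\lambda_m\ge1)$ has $\lambda_i$ left-justified boxes in row $i$; $N=\sum\lambda_i$. $S(\lambda)$: standard Young tableaux (fillings with $1,\dots,N$ each once, strictly increasing along rows and down columns). A row-standard filling uses $1,\dots,N$ once each with rows strictly increasing. Inversion pairs of a row-standard $\tau$: for a box $c$ and $r\ge1$ let $c^{(r)}$ be the box $r$ positions to its right, if it exists. For distinct boxes $c,c'$ in the same column with $\tau(c)<\tau(c')$, let $r\ge1$ be least such that one of $c^{(r)},c'^{(r)}$ does not exist or $\tau(c^{(r)})\ne\tau(c'^{(r)})$; $(c,c')$ is an inversion pair if either (one does not exist and $c$ lies below $c'$) or (both exist and $\tau(c^{(r)})>\tau(c'^{(r)})$). $S_k(\lambda)$: row-standard fillings with exactly $k$ inversion pairs. $\mathrm{st}(\tau)$: sort each column increasingly; $S_k^T(\lambda)=\{\tau\in S_k(\lambda):\mathrm{st}(\tau)=T\}$. *)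

theory Defs
  imports Main
begin

text \<open>Boxes are pairs (row, column), both 0-indexed. A shape is a weakly
decreasing list of positive row lengths.\<close>

type_synonym box = "nat \<times> nat"

definition is_shape :: "nat list \<Rightarrow> bool" where
  "is_shape la \<longleftrightarrow> sorted_wrt (\<ge>) la \<and> 0 \<notin> set la"

definition boxes :: "nat list \<Rightarrow> box set" where
  "boxes la = {(i, j). i < length la \<and> j < la ! i}"

text \<open>Fillings are functions on boxes, set to 0 outside the shape.\<close>

definition row_standard :: "nat list \<Rightarrow> (box \<Rightarrow> nat) \<Rightarrow> bool" where
  "row_standard la \<tau> \<longleftrightarrow>
     bij_betw \<tau> (boxes la) {1..sum_list la} \<and>
     (\<forall>c. c \<notin> boxes la \<longrightarrow> \<tau> c = 0) \<and>
     (\<forall>i j. (i, Suc j) \<in> boxes la \<longrightarrow> \<tau> (i, j) < \<tau> (i, Suc j))"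

definition standard :: "nat list \<Rightarrow> (box \<Rightarrow> nat) \<Rightarrow> bool" where
  "standard la T \<longleftrightarrow> row_standard la T \<and>
     (\<forall>i j. (Suc i, j) \<in> boxes la \<longrightarrow> T (i, j) < T (Suc i, j))"

definition shift :: "box \<Rightarrow> nat \<Rightarrow> box" where
  "shift c r = (fst c, snd c + r)"

definition first_diff :: "nat list \<Rightarrow> (box \<Rightarrow> nat) \<Rightarrow> box \<Rightarrow> box \<Rightarrow> nat" where
  "first_diff la \<tau> c c' = (LEAST r. 1 \<le> r \<and>
      \<not> (shift c r \<in> boxes la \<and> shift c' r \<in> boxes la \<and> \<tau> (shift c r) = \<tau> (shift c' r)))"

definition inversion_pair :: "nat list \<Rightarrow> (box \<Rightarrow> nat) \<Rightarrow> box \<Rightarrow> box \<Rightarrow> bool" where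
  "inversion_pair la \<tau> c c' \<longleftrightarrow>
     c \<in> boxes la \<and> c' \<in> boxes la \<and> c \<noteq> c' \<and> snd c = snd c' \<and> \<tau> c < \<tau> c' \<and>
     (let r = first_diff la \<tau> c c' in
        (\<not> (shift c r \<in> boxes la \<and> shift c' r \<in> boxes la) \<and> fst c' < fst c) \<or>
        (shift c r \<in> boxes la \<and> shift c' r \<in> boxes la \<and> \<tau> (shift c' r) < \<tau> (shift c r)))"

definition inv_count :: "nat list \<Rightarrow> (box \<Rightarrow> nat) \<Rightarrow> nat" where
  "inv_count la \<tau> = card {(c, c'). inversion_pair la \<tau> c c'}"

definition S_k :: "nat list \<Rightarrow> nat \<Rightarrow> (box \<Rightarrow> nat) set" where
  "S_k la k = {\<tau>. row_standard la \<tau> \<and> inv_count la \<tau> = k}"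

definition st :: "nat list \<Rightarrow> (box \<Rightarrow> nat) \<Rightarrow> (box \<Rightarrow> nat)" where
  "st la \<tau> = (\<lambda>(i, j). if (i, j) \<in> boxes la
       then sorted_list_of_set (\<tau> ` {c \<in> boxes la. snd c = j}) ! i else 0)"

definition S_k_T :: "nat list \<Rightarrow> nat \<Rightarrow> (box \<Rightarrow> nat) \<Rightarrow> (box \<Rightarrow> nat) set" where
  "S_k_T la k T = {\<tau> \<in> S_k la k. st la \<tau> = T}"

end

theory Submission
  imports Defs "HOL-Computational_Algebra.Polynomial" "HOL-Library.FuncSet"
begin

text \<open>Consider the row-standard fillings whose columns carry the same sets of entries as the
  standard tableau \<open>T\<close>. Read from right to left, column \<open>j\<close> of such a filling is a permutation of
  column \<open>j\<close> of \<open>T\<close>, indexed by the right neighbours; row-standardness bounds each entry of this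
  permutation from above, and the inversion pairs inside column \<open>j\<close> are exactly its inversions.
  Permutations whose entries have increasing upper bounds \<open>c k\<close> have inversion generating function
  \<open>\<Prod>k [c k - k]\<^sub>q\<close>, by peeling off the first entry, so \<open>\<chi>\<^sup>T(q)\<close> is a product of \<open>q\<close>-integers.
  Multiplying by \<open>[m]\<^sub>q\<close> replaces a coefficient sequence by its sums over windows of length \<open>m\<close>,
  which preserves log-concavity of sequences without internal zeros.\<close>

section \<open>Log-concave sequences\<close>

definition log_concave :: "(int \<Rightarrow> nat) \<Rightarrow> bool" where
  "log_concave f \<longleftrightarrow> (\<forall>i. f (i - 1) * f (i + 1) \<le> f i * f i)"

definition no_internal_zeros :: "(int \<Rightarrow> nat) \<Rightarrow> bool" where
  "no_internal_zeros f \<longleftrightarrow> (\<forall>i j l. i \<le> j \<longrightarrow> j \<le> l \<longrightarrow> 0 < f i \<longrightarrow> 0 < f l \<longrightarrow> 0 < f j)"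

lemma no_internal_zerosD:
  assumes "no_internal_zeros f" "0 < f a" "0 < f b" "min a b \<le> p" "p \<le> max a b"
  shows "0 < f p"
proof (cases "a \<le> b")
  case True
  then show ?thesis using assms unfolding no_internal_zeros_def min_def max_def
    by (elim allE[of _ a] allE[of _ p] allE[of _ b]) simp
next
  case False
  then show ?thesis using assms unfolding no_internal_zeros_def min_def max_def
    by (elim allE[of _ b] allE[of _ p] allE[of _ a]) simp
qed

lemma log_concave_cross_le:
  assumes lc: "log_concave f" and nz: "no_internal_zeros f" and "i \<le> j"
  shows "f (i - 1) * f (j + 1) \<le> f i * f j"
proof -
  have "f (i - 1) * f (i + int d + 1) \<le> f i * f (i + int d)" for d
  proof (induction d)
    case 0
    then show ?case using lc unfolding log_concave_def by simp
  next
    case (Suc d)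
    let ?j = "i + int d"
    have IH: "f (i - 1) * f (?j + 1) \<le> f i * f ?j" using Suc by simp
    have step: "f ?j * f (?j + 2) \<le> f (?j + 1) * f (?j + 1)"
      using lc unfolding log_concave_def
      by (metis add.commute add_diff_cancel_left' one_add_one add.left_commute)
    have "f (i - 1) * f (?j + 2) \<le> f i * f (?j + 1)"
    proof (cases "f (i - 1) = 0 \<or> f (?j + 2) = 0")
      case False
      \<comment> \<open>multiply the induction hypothesis by the next log-concavity step and cancel\<close>
      then have pos: "0 < f ?j" "0 < f (?j + 1)"
        using no_internal_zerosD[OF nz, of "i - 1" "?j + 2"] by auto
      have "f (i - 1) * f (?j + 2) * (f ?j * f (?j + 1))
            = (f (i - 1) * f (?j + 1)) * (f ?j * f (?j + 2))" by (simp add: ac_simps)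
      also have "\<dots> \<le> (f i * f ?j) * (f (?j + 1) * f (?j + 1))"
        using IH step by (rule mult_le_mono)
      also have "\<dots> = (f i * f (?j + 1)) * (f ?j * f (?j + 1))" by (simp add: ac_simps)
      finally show ?thesis using pos by (metis mult_le_cancel2 nat_0_less_mult_iff)
    qed (metis le0 mult_is_0)
    moreover have "i + int (Suc d) + 1 = ?j + 2" "i + int (Suc d) = ?j + 1" by simp_all
    ultimately show ?case by metis
  qed
  from this[of "nat (j - i)"] show ?thesis using \<open>i \<le> j\<close> by simp
qed

lemma window_sum_sq_decomp:
  fixes x :: "int \<Rightarrow> int"
  shows "(\<Sum>t\<le>m. x (int t)) * (\<Sum>t\<le>m. x (int t)) - (\<Sum>t\<le>m. x (int t + 1)) * (\<Sum>t\<le>m. x (int t - 1))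
    = (\<Sum>t<m. x 0 * x (int t) - x (-1) * x (int t + 1))
    + (\<Sum>s\<le>m. x (int s) * x (int m) - x (int s - 1) * x (int m + 1))"
proof -
  define S where "S = (\<Sum>t\<le>m. x (int t))"
  have lt: "(\<Sum>t<m. x (int t)) = S - x (int m)"
    unfolding S_def lessThan_Suc_atMost[symmetric] by simp
  have shift: "x 0 + (\<Sum>t<m. x (int t + 1)) = S"
    unfolding S_def lessThan_Suc_atMost[symmetric] sum.lessThan_Suc_shift by (simp add: add.commute)
  have up: "(\<Sum>t\<le>m. x (int t + 1)) = S - x 0 + x (int m + 1)"
    using shift unfolding lessThan_Suc_atMost[symmetric] by simp
  have down: "(\<Sum>t\<le>m. x (int t - 1)) = x (-1) + S - x (int m)"
    unfolding lessThan_Suc_atMost[symmetric] sum.lessThan_Suc_shift using lt by simp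
  have G1: "(\<Sum>t<m. x 0 * x (int t) - x (-1) * x (int t + 1))
        = x 0 * (S - x (int m)) - x (-1) * (S - x 0)"
    unfolding sum_subtractf sum_distrib_left[symmetric] lt shift[symmetric] by simp
  have G2: "(\<Sum>s\<le>m. x (int s) * x (int m) - x (int s - 1) * x (int m + 1))
        = x (int m) * S - x (int m + 1) * (x (-1) + S - x (int m))"
    unfolding sum_subtractf sum_distrib_right[symmetric] down S_def by (simp add: mult.commute)
  show ?thesis unfolding G1 G2 up down S_def[symmetric] by algebra
qed

lemma log_concave_window_sum:
  assumes lc: "log_concave f" and nz: "no_internal_zeros f" and "0 < m"
  shows "log_concave (\<lambda>n. \<Sum>t<m. f (n - int t))"
  unfolding log_concave_def
proof
  fix n :: int
  obtain m' where m: "m = Suc m'" using \<open>0 < m\<close> by (cases m) auto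
  define x where "x = (\<lambda>t. int (f (n - t)))"
  have window: "int (\<Sum>t<m. f (n + d - int t)) = (\<Sum>t\<le>m'. x (int t - d))" for d
    unfolding x_def m lessThan_Suc_atMost by (simp add: algebra_simps)
  have term1: "0 \<le> x 0 * x (int t) - x (-1) * x (int t + 1)" for t
    using log_concave_cross_le[OF lc nz, of "n - int t" n]
    unfolding x_def by (simp add: algebra_simps flip: of_nat_mult)
  have term2: "0 \<le> x (int s) * x (int m') - x (int s - 1) * x (int m' + 1)" if "s \<le> m'" for s
    using that log_concave_cross_le[OF lc nz, of "n - int m'" "n - int s"]
    unfolding x_def by (simp add: algebra_simps flip: of_nat_mult)
  have "0 \<le> (\<Sum>t<m'. x 0 * x (int t) - x (-1) * x (int t + 1))"
    using term1 by (intro sum_nonneg) simp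
  moreover have "0 \<le> (\<Sum>s\<le>m'. x (int s) * x (int m') - x (int s - 1) * x (int m' + 1))"
    using term2 by (intro sum_nonneg) simp
  ultimately have "(\<Sum>t\<le>m'. x (int t - -1)) * (\<Sum>t\<le>m'. x (int t - 1))
        \<le> (\<Sum>t\<le>m'. x (int t - 0)) * (\<Sum>t\<le>m'. x (int t - 0))"
    using window_sum_sq_decomp[of x m'] by simp
  then have "int ((\<Sum>t<m. f (n - 1 - int t)) * (\<Sum>t<m. f (n + 1 - int t)))
        \<le> int ((\<Sum>t<m. f (n - int t)) * (\<Sum>t<m. f (n - int t)))"
    unfolding of_nat_mult using window[of "-1"] window[of 1] window[of 0] by simp
  then show "(\<Sum>t<m. f (n - 1 - int t)) * (\<Sum>t<m. f (n + 1 - int t))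
        \<le> (\<Sum>t<m. f (n - int t)) * (\<Sum>t<m. f (n - int t))"
    by (simp only: of_nat_le_iff)
qed

lemma no_internal_zeros_window_sum:
  assumes nz: "no_internal_zeros f"
  shows "no_internal_zeros (\<lambda>n. \<Sum>t<m. f (n - int t))"
  unfolding no_internal_zeros_def
proof (intro allI impI)
  fix i j l :: int
  assume "i \<le> j" "j \<le> l" "0 < (\<Sum>t<m. f (i - int t))" "0 < (\<Sum>t<m. f (l - int t))"
  moreover have "\<exists>t<m. 0 < g t" if "0 < (\<Sum>t<m. g t)" for g :: "nat \<Rightarrow> nat"
  proof (rule ccontr)
    assume "\<not> (\<exists>t<m. 0 < g t)"
    then have "(\<Sum>t<m. g t) = 0" by (intro sum.neutral) auto
    with that show False by simp
  qed
  ultimately obtain t1 t2 where t12: "t1 < m" "0 < f (i - int t1)" "t2 < m" "0 < f (l - int t2)"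
    by blast
  \<comment> \<open>some shift of \<open>j\<close> in the window falls between the two nonzero positions\<close>
  obtain t where t: "t < m" "min (i - int t1) (l - int t2) \<le> j - int t"
      "j - int t \<le> max (i - int t1) (l - int t2)"
  proof (cases "j - int t1 \<le> l - int t2")
    case True then show ?thesis using that[of t1] t12 \<open>i \<le> j\<close> by simp
  next
    case outside: False
    show ?thesis
    proof (cases "i - int t1 \<le> j - int t2")
      case True then show ?thesis using that[of t2] t12 \<open>j \<le> l\<close> by simp
    next
      case False
      then show ?thesis using that[of "nat (j - (i - int t1))"] outside t12 \<open>i \<le> j\<close> by simp
    qed
  qed
  then have "0 < f (j - int t)" using no_internal_zerosD[OF nz] t12 by blast
  then show "0 < (\<Sum>t<m. f (j - int t))"
    using t(1) member_le_sum[of t "{..<m}" "\<lambda>t. f (j - int t)"] by simp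
qed

section \<open>Generating polynomials\<close>

text \<open>Coefficients are indexed by integers so that the left neighbour of the constant coefficient
  is a genuine zero.\<close>

definition int_coeff :: "nat poly \<Rightarrow> int \<Rightarrow> nat" where
  "int_coeff p i = (if i < 0 then 0 else coeff p (nat i))"

definition q_int :: "nat \<Rightarrow> nat poly" where
  "q_int m = (\<Sum>i<m. monom 1 i)"

lemma log_concave_int_coeff_1: "log_concave (int_coeff 1)" "no_internal_zeros (int_coeff 1)"
proof -
  have *: "int_coeff 1 i = (if i = 0 then 1 else 0)" for i
    unfolding int_coeff_def by (auto simp: coeff_1 nat_eq_iff)
  show "log_concave (int_coeff 1)" "no_internal_zeros (int_coeff 1)"
    unfolding log_concave_def no_internal_zeros_def * by auto
qed

lemma int_coeff_mult_q_int: "int_coeff (p * q_int m) n = (\<Sum>t<m. int_coeff p (n - int t))"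
proof (cases "n < 0")
  case False
  have "coeff (p * q_int m) (nat n) = (\<Sum>t<m. coeff (monom 1 t * p) (nat n))"
    unfolding q_int_def sum_distrib_left coeff_sum by (simp add: mult.commute)
  also have "\<dots> = (\<Sum>t<m. int_coeff p (n - int t))"
    unfolding coeff_monom_mult int_coeff_def using False
    by (intro sum.cong) (auto simp: nat_diff_distrib')
  finally show ?thesis unfolding int_coeff_def using False by simp
qed (simp add: int_coeff_def)

lemma log_concave_int_coeff_prod_q_int:
  assumes "finite I" "\<And>i. i \<in> I \<Longrightarrow> 0 < m i"
  shows "log_concave (int_coeff (\<Prod>i\<in>I. q_int (m i))) \<and>
    no_internal_zeros (int_coeff (\<Prod>i\<in>I. q_int (m i)))"
  using assms
proof (induction I rule: finite_induct)
  case empty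
  then show ?case using log_concave_int_coeff_1 by simp
next
  case (insert i I)
  have "(\<Prod>i\<in>insert i I. q_int (m i)) = (\<Prod>i\<in>I. q_int (m i)) * q_int (m i)"
    using insert.hyps by (simp add: mult.commute)
  then have "int_coeff (\<Prod>i\<in>insert i I. q_int (m i))
      = (\<lambda>n. \<Sum>t<m i. int_coeff (\<Prod>i\<in>I. q_int (m i)) (n - int t))"
    by (simp add: int_coeff_mult_q_int fun_eq_iff)
  then show ?case
    using insert log_concave_window_sum no_internal_zeros_window_sum by simp
qed

definition gen_poly :: "'a set \<Rightarrow> ('a \<Rightarrow> nat) \<Rightarrow> nat poly" where
  "gen_poly A w = (\<Sum>x\<in>A. monom 1 (w x))"

lemma coeff_gen_poly:
  assumes "finite A" shows "coeff (gen_poly A w) k = card {x\<in>A. w x = k}"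
proof -
  have "coeff (gen_poly A w) k = (\<Sum>x\<in>A. if w x = k then 1 else 0)"
    unfolding gen_poly_def coeff_sum by (intro sum.cong) auto
  also have "\<dots> = (\<Sum>x\<in>{x\<in>A. w x = k}. 1)"
    using assms by (simp only: sum.inter_filter)
  finally show ?thesis by (simp del: One_nat_def)
qed

lemma gen_poly_reindex:
  assumes "bij_betw f A B" "\<And>x. x \<in> A \<Longrightarrow> w' (f x) = w x"
  shows "gen_poly B w' = gen_poly A w"
proof -
  have "gen_poly B w' = (\<Sum>x\<in>A. monom 1 (w' (f x)))"
    unfolding gen_poly_def using sum.reindex_bij_betw[OF assms(1), of "\<lambda>y. monom 1 (w' y)"]
    by (rule sym)
  also have "\<dots> = gen_poly A w" unfolding gen_poly_def using assms(2) by (intro sum.cong) auto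
  finally show ?thesis .
qed

lemma q_int_eq_gen_poly: "q_int m = gen_poly {..<m} (\<lambda>a. a)"
  unfolding q_int_def gen_poly_def ..

lemma gen_poly_Times:
  assumes "finite A" "finite B"
  shows "gen_poly (A \<times> B) (\<lambda>(a, b). v a + w b) = gen_poly A v * gen_poly B w"
proof -
  have "gen_poly A v * gen_poly B w = (\<Sum>a\<in>A. \<Sum>b\<in>B. monom 1 (v a) * monom 1 (w b))"
    unfolding gen_poly_def sum_product ..
  also have "\<dots> = (\<Sum>a\<in>A. \<Sum>b\<in>B. monom 1 (v a + w b))"
    by (simp only: mult_monom mult_1)
  also have "\<dots> = gen_poly (A \<times> B) (\<lambda>(a, b). v a + w b)"
    unfolding gen_poly_def sum.cartesian_product by (simp add: case_prod_beta)
  finally show ?thesis by (rule sym)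
qed

lemma prod_monom_1: "finite I \<Longrightarrow> (\<Prod>i\<in>I. monom (1::nat) (f i)) = monom 1 (\<Sum>i\<in>I. f i)"
  by (induction I rule: finite_induct) (auto simp: mult_monom simp del: One_nat_def)

lemma gen_poly_PiE:
  assumes "finite I" "\<And>i. i \<in> I \<Longrightarrow> finite (A i)"
  shows "gen_poly (PiE I A) (\<lambda>g. \<Sum>i\<in>I. w i (g i)) = (\<Prod>i\<in>I. gen_poly (A i) (w i))"
proof -
  have "(\<Prod>i\<in>I. gen_poly (A i) (w i)) = (\<Sum>g\<in>PiE I A. \<Prod>i\<in>I. monom 1 (w i (g i)))"
    unfolding gen_poly_def by (rule prod_sum_PiE) (use assms in auto)
  also have "\<dots> = gen_poly (PiE I A) (\<lambda>g. \<Sum>i\<in>I. w i (g i))"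
    unfolding gen_poly_def by (intro sum.cong refl prod_monom_1[OF assms(1)])
  finally show ?thesis by (rule sym)
qed

section \<open>Permutations with bounded entries\<close>

definition perm_lists :: "nat \<Rightarrow> nat list set" where
  "perm_lists h = {s. distinct s \<and> set s = {0..<h}}"

definition inv_pairs :: "nat list \<Rightarrow> (nat \<times> nat) set" where
  "inv_pairs s = {(a, b). a < b \<and> b < length s \<and> s ! b < s ! a}"

definition inversions :: "nat list \<Rightarrow> nat" where
  "inversions s = card (inv_pairs s)"

definition bounded_perms :: "nat \<Rightarrow> (nat \<Rightarrow> nat) \<Rightarrow> nat list set" where
  "bounded_perms h c = {s \<in> perm_lists h. \<forall>k<h. s ! k < c k}"

lemma length_perm_lists: "s \<in> perm_lists h \<Longrightarrow> length s = h"
  unfolding perm_lists_def using distinct_card by fastforce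

lemma perm_lists_0: "perm_lists 0 = {[]}"
  unfolding perm_lists_def by auto

lemma finite_perm_lists: "finite (perm_lists h)"
proof -
  have "perm_lists h \<subseteq> {xs. set xs \<subseteq> {0..<h} \<and> length xs = h}"
    using length_perm_lists unfolding perm_lists_def by auto
  then show ?thesis using finite_lists_length_eq[OF finite_atLeastLessThan] finite_subset by blast
qed

lemma bij_betw_nth_perm_lists: "s \<in> perm_lists h \<Longrightarrow> bij_betw ((!) s) {..<h} {..<h}"
proof -
  assume s: "s \<in> perm_lists h"
  have "length s = h" using length_perm_lists[OF s] .
  moreover have "distinct s" "set s = {0..<h}" using s unfolding perm_lists_def by auto
  moreover have "{0..<h} = {..<h}" by auto
  ultimately show ?thesis by (intro bij_betw_nth) simp_all
qed

lemma finite_bounded_perms: "finite (bounded_perms h c)"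
  unfolding bounded_perms_def using finite_perm_lists by simp

lemma finite_inv_pairs: "finite (inv_pairs s)"
  unfolding inv_pairs_def by (rule finite_subset[of _ "{..<length s} \<times> {..<length s}"]) auto

lemma inv_pairs_map_strict_mono: "strict_mono f \<Longrightarrow> inv_pairs (map f s) = inv_pairs s"
  unfolding inv_pairs_def by (simp add: strict_mono_less cong: conj_cong)

lemma inversions_Cons:
  "inversions (x # xs) = length (filter (\<lambda>y. y < x) xs) + inversions xs"
proof -
  let ?first = "(\<lambda>b. (0::nat, Suc b)) ` {b. b < length xs \<and> xs ! b < x}"
  let ?rest = "(\<lambda>(a, b). (Suc a, Suc b)) ` inv_pairs xs"
  have "inv_pairs (x # xs) = ?first \<union> ?rest"
  proof (intro equalityI subsetI)
    fix p assume "p \<in> inv_pairs (x # xs)"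
    then obtain a b where
      "p = (Suc a, Suc b) \<and> (a, b) \<in> inv_pairs xs \<or> p = (0, Suc b) \<and> b < length xs \<and> xs ! b < x"
      unfolding inv_pairs_def by (auto simp: less_Suc_eq_0_disj nth_Cons' split: if_splits)
    then show "p \<in> ?first \<union> ?rest" by force
  qed (auto simp: inv_pairs_def)
  moreover have "card ?first = length (filter (\<lambda>y. y < x) xs)"
    by (subst card_image) (auto simp: inj_on_def length_filter_conv_card)
  moreover have "card ?rest = card (inv_pairs xs)"
    by (rule card_image) (auto simp: inj_on_def)
  moreover have "card (?first \<union> ?rest) = card ?first + card ?rest"
    by (intro card_Un_disjoint finite_imageI finite_inv_pairs) force+
  ultimately show ?thesis unfolding inversions_def by simp
qed

definition insert_gap :: "nat \<Rightarrow> nat \<Rightarrow> nat" where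
  "insert_gap a v = (if a \<le> v then Suc v else v)"

definition close_gap :: "nat \<Rightarrow> nat \<Rightarrow> nat" where
  "close_gap a v = (if a < v then v - 1 else v)"

lemma strict_mono_insert_gap: "strict_mono (insert_gap a)"
  unfolding strict_mono_def insert_gap_def by auto

lemma insert_gap_image: "a \<le> h \<Longrightarrow> insert_gap a ` {0..<h} = {0..<Suc h} - {a}"
proof (intro equalityI subsetI)
  fix v assume "a \<le> h" "v \<in> {0..<Suc h} - {a}"
  then have "v = insert_gap a (if v < a then v else v - 1)" "(if v < a then v else v - 1) \<in> {0..<h}"
    unfolding insert_gap_def by auto
  then show "v \<in> insert_gap a ` {0..<h}" by blast
qed (auto simp: insert_gap_def)

lemma close_gap_image: "a < Suc h \<Longrightarrow> close_gap a ` ({0..<Suc h} - {a}) = {0..<h}"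
proof (intro equalityI subsetI)
  fix v assume "a < Suc h" "v \<in> {0..<h}"
  then have "v = close_gap a (insert_gap a v)" "insert_gap a v \<in> {0..<Suc h} - {a}"
    unfolding insert_gap_def close_gap_def by auto
  then show "v \<in> close_gap a ` ({0..<Suc h} - {a})" by blast
qed (auto simp: close_gap_def)

lemma inversions_cons_insert_gap:
  assumes "a \<le> h" "s \<in> perm_lists h"
  shows "inversions (a # map (insert_gap a) s) = a + inversions s"
proof -
  have s: "distinct s" "set s = {0..<h}" using assms(2) unfolding perm_lists_def by auto
  have "length (filter (\<lambda>y. y < a) (map (insert_gap a) s)) = length (filter (\<lambda>v. v < a) s)"
    by (simp add: filter_map o_def insert_gap_def not_le)
  also have "\<dots> = card ({v. v < a} \<inter> {0..<h})" using distinct_length_filter[OF s(1)] s(2) by simp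
  also have "{v. v < a} \<inter> {0..<h} = {0..<a}" using assms(1) by auto
  finally have "length (filter (\<lambda>y. y < a) (map (insert_gap a) s)) = a" by simp
  moreover have "inversions (map (insert_gap a) s) = inversions s"
    unfolding inversions_def by (simp add: inv_pairs_map_strict_mono[OF strict_mono_insert_gap])
  ultimately show ?thesis by (simp add: inversions_Cons)
qed

lemma cons_insert_gap_mem_bounded_perms:
  assumes "a < c 0" "c 0 \<le> Suc h" "mono_on {..<Suc h} c"
    and s: "s \<in> bounded_perms h (\<lambda>k. c (Suc k) - 1)"
  shows "a # map (insert_gap a) s \<in> bounded_perms (Suc h) c"
proof -
  have a: "a \<le> h" using assms(1,2) by simp
  have s_perm: "distinct s" "set s = {0..<h}" "length s = h"
    using s length_perm_lists unfolding bounded_perms_def perm_lists_def by auto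
  have "distinct (map (insert_gap a) s)"
    using s_perm(1) strict_mono_imp_inj_on[OF strict_mono_insert_gap]
    by (simp add: distinct_map inj_on_subset)
  moreover have "a \<notin> set (map (insert_gap a) s)" by (auto simp: insert_gap_def)
  moreover have "set (map (insert_gap a) s) = {0..<Suc h} - {a}"
    using insert_gap_image[OF a] s_perm(2) by simp
  ultimately have "a # map (insert_gap a) s \<in> perm_lists (Suc h)"
    unfolding perm_lists_def using a by auto
  moreover have "(a # map (insert_gap a) s) ! Suc k < c (Suc k)" if "k < h" for k
  proof -
    have "s ! k < c (Suc k) - 1" using s that unfolding bounded_perms_def by simp
    moreover have "c 0 \<le> c (Suc k)" using assms(3) that by (auto intro: mono_onD)
    ultimately show ?thesis using that s_perm(3) assms(1) unfolding insert_gap_def by auto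
  qed
  ultimately show ?thesis
    unfolding bounded_perms_def using assms(1) by (auto simp: less_Suc_eq_0_disj)
qed

lemma close_gap_tl_mem_bounded_perms:
  assumes "mono_on {..<Suc h} c" and s: "s \<in> bounded_perms (Suc h) c"
  shows "hd s < c 0 \<and> map (close_gap (hd s)) (tl s) \<in> bounded_perms h (\<lambda>k. c (Suc k) - 1)"
proof -
  have "length s = Suc h" using s length_perm_lists unfolding bounded_perms_def by auto
  then obtain x xs where sx: "s = x # xs" by (cases s) auto
  have perm: "distinct (x # xs)" "set (x # xs) = {0..<Suc h}" "length xs = h"
    using s sx \<open>length s = Suc h\<close> unfolding bounded_perms_def perm_lists_def by auto
  have bound: "\<forall>k<Suc h. (x # xs) ! k < c k" using s sx unfolding bounded_perms_def by auto
  have "inj_on (close_gap x) (set xs)"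
  proof (rule inj_onI)
    fix u v assume "u \<in> set xs" "v \<in> set xs" "close_gap x u = close_gap x v"
    moreover have "u \<noteq> x" "v \<noteq> x" using perm(1) calculation by auto
    ultimately show "u = v" unfolding close_gap_def by (auto split: if_splits)
  qed
  then have "distinct (map (close_gap x) xs)" using perm(1) by (simp add: distinct_map)
  moreover have "set (map (close_gap x) xs) = {0..<h}"
  proof -
    have "set xs = {0..<Suc h} - {x}" "x < Suc h" using perm(1,2) by auto
    then show ?thesis using close_gap_image[of x h] by (metis set_map)
  qed
  moreover have "map (close_gap x) xs ! k < c (Suc k) - 1" if "k < h" for k
  proof -
    have "xs ! k < c (Suc k)" "xs ! k \<noteq> x" "x < c 0"
      using bound perm that by (auto simp: nth_mem)
    moreover have "c 0 \<le> c (Suc k)" using assms(1) that by (auto intro: mono_onD)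
    ultimately show ?thesis using that perm(3) unfolding close_gap_def by auto
  qed
  ultimately show ?thesis
    using sx bound unfolding bounded_perms_def perm_lists_def by auto
qed

lemma bij_betw_bounded_perms_Suc:
  assumes "c 0 \<le> Suc h" "mono_on {..<Suc h} c"
  shows "bij_betw (\<lambda>(a, s). a # map (insert_gap a) s)
           ({..<c 0} \<times> bounded_perms h (\<lambda>k. c (Suc k) - 1)) (bounded_perms (Suc h) c)"
proof -
  let ?f = "\<lambda>(a, s). a # map (insert_gap a) s" and ?g = "\<lambda>s. (hd s, map (close_gap (hd s)) (tl s))"
  let ?A = "{..<c 0} \<times> bounded_perms h (\<lambda>k. c (Suc k) - 1)" and ?B = "bounded_perms (Suc h) c"
  have "\<forall>p\<in>?A. ?g (?f p) = p"
    by (auto simp: close_gap_def insert_gap_def map_idI)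
  moreover have "\<forall>s\<in>?B. ?f (?g s) = s"
  proof
    fix s assume s: "s \<in> ?B"
    then have "length s = Suc h" using length_perm_lists unfolding bounded_perms_def by auto
    then obtain x xs where sx: "s = x # xs" by (cases s) auto
    then have "x \<notin> set xs" using s unfolding bounded_perms_def perm_lists_def by auto
    then have "map (insert_gap x) (map (close_gap x) xs) = xs"
      by (auto simp: insert_gap_def close_gap_def intro!: map_idI)
    then show "?f (?g s) = s" using sx by simp
  qed
  moreover have "?f ` ?A \<subseteq> ?B"
    using cons_insert_gap_mem_bounded_perms[OF _ assms] by (intro image_subsetI) clarsimp
  moreover have "?g ` ?B \<subseteq> ?A"
    using close_gap_tl_mem_bounded_perms[OF assms(2)]
    by (intro image_subsetI) (simp only: mem_Times_iff lessThan_iff fst_conv snd_conv)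
  ultimately show ?thesis by (rule bij_betw_byWitness)
qed

lemma gen_poly_bounded_perms:
  assumes "\<forall>k<h. k < c k \<and> c k \<le> h" "mono_on {..<h} c"
  shows "gen_poly (bounded_perms h c) inversions = (\<Prod>k<h. q_int (c k - k))"
  using assms
proof (induction h arbitrary: c)
  case 0
  have "bounded_perms 0 c = {[]}" unfolding bounded_perms_def perm_lists_0 by auto
  then show ?case unfolding gen_poly_def inversions_def inv_pairs_def by (simp del: One_nat_def)
next
  case (Suc h)
  define c' where "c' = (\<lambda>k. c (Suc k) - 1)"
  have "\<forall>k<h. k < c' k \<and> c' k \<le> h" using Suc.prems(1) unfolding c'_def
    by (metis Suc_less_eq diff_Suc_1 diff_le_mono less_diff_conv Suc_eq_plus1)
  moreover have "mono_on {..<h} c'"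
    using Suc.prems(2) unfolding c'_def by (auto intro!: mono_onI diff_le_mono dest: mono_onD)
  ultimately have IH: "gen_poly (bounded_perms h c') inversions = (\<Prod>k<h. q_int (c' k - k))"
    by (rule Suc.IH)
  have c0: "c 0 \<le> Suc h" using Suc.prems(1) by simp
  have "gen_poly (bounded_perms (Suc h) c) inversions
      = gen_poly ({..<c 0} \<times> bounded_perms h c') (\<lambda>(a, s). a + inversions s)"
  proof (rule gen_poly_reindex[OF bij_betw_bounded_perms_Suc[OF c0 Suc.prems(2), folded c'_def]])
    fix p assume "p \<in> {..<c 0} \<times> bounded_perms h c'"
    then show "inversions ((\<lambda>(a, s). a # map (insert_gap a) s) p) = (\<lambda>(a, s). a + inversions s) p"
      using c0 unfolding bounded_perms_def by (auto intro!: inversions_cons_insert_gap[of _ h])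
  qed
  also have "\<dots> = q_int (c 0) * gen_poly (bounded_perms h c') inversions"
    by (simp add: gen_poly_Times finite_bounded_perms q_int_eq_gen_poly)
  also have "\<dots> = (\<Prod>k<Suc h. q_int (c k - k))"
    unfolding IH by (subst prod.lessThan_Suc_shift) (simp add: c'_def)
  finally show ?case .
qed

section \<open>Fillings with the column sets of a standard tableau\<close>

lemma Collect_downclosed_eq_lessThan:
  assumes "\<And>i i'. i' \<le> i \<Longrightarrow> P i \<Longrightarrow> P i'" "finite {i. P i}"
  shows "{i. P i} = {..<card {i::nat. P i}}"
proof -
  obtain n where n: "\<not> P n"
    using assms(2) by (metis finite_nat_set_iff_bounded mem_Collect_eq less_irrefl)
  define m where "m = (LEAST i. \<not> P i)"
  have "\<not> P m" unfolding m_def using n by (rule LeastI)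
  then have "P i \<longleftrightarrow> i < m" for i
    using assms(1) not_less_Least[of i "\<lambda>i. \<not> P i"] unfolding m_def[symmetric] by (meson not_less)
  then show ?thesis by auto
qed

lemma first_diff_eq_1:
  assumes "inj_on \<tau> (boxes la)" "c \<in> boxes la" "c' \<in> boxes la" "c \<noteq> c'" "snd c = snd c'"
  shows "first_diff la \<tau> c c' = 1"
  unfolding first_diff_def
proof (rule Least_equality)
  have "shift c 1 \<noteq> shift c' 1" using assms(4,5) unfolding shift_def by (cases c, cases c') auto
  then show "1 \<le> (1::nat) \<and>
      \<not> (shift c 1 \<in> boxes la \<and> shift c' 1 \<in> boxes la \<and> \<tau> (shift c 1) = \<tau> (shift c' 1))"
    using assms(1) by (auto dest: inj_onD)
qed simp

locale standard_tableau =
  fixes la :: "nat list" and T :: "box \<Rightarrow> nat"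
  assumes shape: "is_shape la" and standard: "standard la T"
begin

definition col_height :: "nat \<Rightarrow> nat" where
  "col_height j = length (filter (\<lambda>x. j < x) la)"

text \<open>The number of boxes \<open>N\<close> serves as a bound on the number of columns.\<close>

definition N :: nat where
  "N = sum_list la"

lemma mem_boxes_iff: "(i, j) \<in> boxes la \<longleftrightarrow> i < col_height j"
proof -
  have "la ! i \<le> la ! i'" if "i' \<le> i" "i < length la" for i i'
    using shape that unfolding is_shape_def
    by (cases "i' = i") (auto simp: sorted_wrt_iff_nth_less)
  then have "{i. i < length la \<and> j < la ! i} = {..<card {i. i < length la \<and> j < la ! i}}"
    by (intro Collect_downclosed_eq_lessThan) fastforce+
  moreover have "col_height j = card {i. i < length la \<and> j < la ! i}"
    unfolding col_height_def by (simp add: length_filter_conv_card)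
  ultimately show ?thesis unfolding boxes_def by auto
qed

lemma col_height_Suc_le: "col_height (Suc j) \<le> col_height j"
  unfolding col_height_def by (induction la) auto

lemma less_N_if_col_height_pos: "0 < col_height j \<Longrightarrow> j < N"
proof -
  assume "0 < col_height j"
  then have "j < la ! 0" "0 < length la" using mem_boxes_iff[of 0 j] unfolding boxes_def by auto
  moreover have "la ! 0 \<le> sum_list la" using calculation(2) by (simp add: elem_le_sum_list)
  ultimately show ?thesis unfolding N_def by simp
qed

lemma col_height_eq_0: "N \<le> j \<Longrightarrow> col_height j = 0"
  using less_N_if_col_height_pos by fastforce

lemma T_row_standard: "row_standard la T"
  using standard unfolding standard_def by simp

lemma bij_betw_T: "bij_betw T (boxes la) {1..sum_list la}"
  using T_row_standard unfolding row_standard_def by simp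

lemma inj_on_T: "inj_on T (boxes la)"
  using bij_betw_T bij_betw_def by blast

lemma T_outside: "c \<notin> boxes la \<Longrightarrow> T c = 0"
  using T_row_standard unfolding row_standard_def by (cases c) auto

lemma T_row_less: "i < col_height (Suc j) \<Longrightarrow> T (i, j) < T (i, Suc j)"
  using T_row_standard mem_boxes_iff unfolding row_standard_def by simp

lemma T_col_less: "i < i' \<Longrightarrow> i' < col_height j \<Longrightarrow> T (i, j) < T (i', j)"
proof (induction i' rule: less_induct)
  case (less i')
  then obtain i'' where i'': "i' = Suc i''" by (cases i') auto
  have step: "T (i'', j) < T (i', j)"
    using standard less.prems mem_boxes_iff i'' unfolding standard_def by simp
  show ?case
  proof (cases "i = i''")
    case False
    then have "T (i, j) < T (i'', j)" using less i'' by simp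
    then show ?thesis using step by simp
  qed (use step in simp)
qed

lemma T_col_le: "i \<le> i' \<Longrightarrow> i' < col_height j \<Longrightarrow> T (i, j) \<le> T (i', j)"
  using T_col_less by (cases "i = i'") (auto intro: less_imp_le)

lemma T_col_less_iff:
  "i < col_height j \<Longrightarrow> i' < col_height j \<Longrightarrow> T (i, j) < T (i', j) \<longleftrightarrow> i < i'"
  using T_col_less by (metis linorder_neqE_nat not_less_iff_gr_or_eq)

definition column :: "nat \<Rightarrow> box set" where
  "column j = {c \<in> boxes la. snd c = j}"

lemma column_eq: "column j = (\<lambda>i. (i, j)) ` {..<col_height j}"
  unfolding column_def using mem_boxes_iff by auto

lemma finite_column: "finite (column j)"
  unfolding column_eq by simp

lemma card_image_column: "inj_on \<tau> (boxes la) \<Longrightarrow> card (\<tau> ` column j) = col_height j"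
proof -
  assume "inj_on \<tau> (boxes la)"
  then have "inj_on \<tau> (column j)" by (rule inj_on_subset) (auto simp: column_def)
  then have "card (\<tau> ` column j) = card (column j)" by (rule card_image)
  also have "\<dots> = col_height j"
    unfolding column_eq by (subst card_image) (auto simp: inj_on_def)
  finally show ?thesis .
qed

lemma sorted_list_of_set_T_column:
  "sorted_list_of_set (T ` column j) = map (\<lambda>i. T (i, j)) [0..<col_height j]"
proof -
  let ?l = "map (\<lambda>i. T (i, j)) [0..<col_height j]"
  have "sorted_wrt (<) ?l"
    unfolding sorted_wrt_iff_nth_less using T_col_less by auto
  moreover have "set ?l = T ` column j" unfolding column_eq by auto
  moreover have "length ?l = card (T ` column j)"
    using card_image_column[OF inj_on_T] by simp
  ultimately show ?thesis
    using sorted_list_of_set_unique[of "T ` column j" ?l] finite_column by simp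
qed

lemma st_eq_T_iff:
  assumes "row_standard la \<tau>"
  shows "st la \<tau> = T \<longleftrightarrow> (\<forall>j. \<tau> ` column j = T ` column j)"
proof
  assume same: "\<forall>j. \<tau> ` column j = T ` column j"
  show "st la \<tau> = T"
  proof
    fix c :: box
    obtain i j where c: "c = (i, j)" by (cases c)
    show "st la \<tau> c = T c"
    proof (cases "c \<in> boxes la")
      case True
      then have "st la \<tau> c = sorted_list_of_set (T ` column j) ! i"
        using same unfolding st_def c column_def by simp
      then show ?thesis
        unfolding sorted_list_of_set_T_column using True mem_boxes_iff c by simp
    qed (simp add: st_def c T_outside)
  qed
next
  assume st: "st la \<tau> = T"
  have inj: "inj_on \<tau> (boxes la)" using assms unfolding row_standard_def bij_betw_def by simp
  show "\<forall>j. \<tau> ` column j = T ` column j"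
  proof
    fix j
    have "T ` column j \<subseteq> \<tau> ` column j"
    proof
      fix v assume "v \<in> T ` column j"
      then obtain i where i: "i < col_height j" "v = T (i, j)" unfolding column_eq by auto
      have "v = sorted_list_of_set (\<tau> ` column j) ! i"
        using i st mem_boxes_iff unfolding st_def column_def by auto
      also have "\<dots> \<in> \<tau> ` column j"
        using i card_image_column[OF inj] finite_column
        by (metis finite_imageI length_sorted_list_of_set nth_mem set_sorted_list_of_set)
      finally show "v \<in> \<tau> ` column j" .
    qed
    then show "\<tau> ` column j = T ` column j"
      using card_image_column[OF inj] card_image_column[OF inj_on_T] finite_column
      by (metis card_subset_eq finite_imageI)
  qed
qed

definition fibre :: "(box \<Rightarrow> nat) set" where
  "fibre = {\<tau>. row_standard la \<tau> \<and> st la \<tau> = T}"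

lemma inj_on_fibre: "\<tau> \<in> fibre \<Longrightarrow> inj_on \<tau> (boxes la)"
  unfolding fibre_def row_standard_def bij_betw_def by simp

lemma fibre_column: "\<tau> \<in> fibre \<Longrightarrow> \<tau> ` column j = T ` column j"
  using st_eq_T_iff unfolding fibre_def by blast

text \<open>A filling with the same column sets as \<open>T\<close> is encoded by one permutation list per column,
  built from right to left. \<open>row_source ss j i\<close> is the row of \<open>T\<close> whose column-\<open>j\<close> entry sits in
  box \<open>(i, j)\<close>; the list \<open>ss j\<close> is indexed by the \<open>T\<close>-row of the right neighbour if box
  \<open>(i, Suc j)\<close> exists, and by \<open>i\<close> itself otherwise. Row-standardness then becomes the
  condition in \<open>col_perms\<close>, and the inversion pairs in column \<open>j\<close> become the inversions of
  \<open>ss j\<close>. The guard \<open>Suc j < N\<close> only serves termination.\<close>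

function row_source :: "(nat \<Rightarrow> nat list) \<Rightarrow> nat \<Rightarrow> nat \<Rightarrow> nat" where
  "row_source ss j i =
     (if Suc j < N \<and> i < col_height (Suc j) then ss j ! row_source ss (Suc j) i else ss j ! i)"
  by auto
termination by (relation "measure (\<lambda>(ss, j, i). N - j)") auto

declare row_source.simps[simp del]

definition src_pos :: "(nat \<Rightarrow> nat list) \<Rightarrow> nat \<Rightarrow> nat \<Rightarrow> nat" where
  "src_pos ss j i = (if i < col_height (Suc j) then row_source ss (Suc j) i else i)"

lemma row_source_eq_nth: "row_source ss j i = ss j ! src_pos ss j i"
proof -
  have "i < col_height (Suc j) \<Longrightarrow> Suc j < N" using less_N_if_col_height_pos[of "Suc j"] by simp
  then show ?thesis unfolding src_pos_def by (subst row_source.simps) simp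
qed

definition col_perms :: "nat \<Rightarrow> nat list set" where
  "col_perms j =
     {s \<in> perm_lists (col_height j). \<forall>k<col_height (Suc j). T (s ! k, j) < T (k, Suc j)}"

definition perm_families :: "(nat \<Rightarrow> nat list) set" where
  "perm_families = PiE {..<N} col_perms"

lemma bij_betw_src_pos_of_row_source:
  assumes "bij_betw (row_source ss (Suc j)) {..<col_height (Suc j)} {..<col_height (Suc j)}"
  shows "bij_betw (src_pos ss j) {..<col_height j} {..<col_height j}"
proof -
  let ?A = "{..<col_height (Suc j)}" and ?B = "{col_height (Suc j)..<col_height j}"
  have e: "{..<col_height j} = ?A \<union> ?B" using col_height_Suc_le[of j] by auto
  have c1: "bij_betw (src_pos ss j) ?A ?A \<longleftrightarrow> bij_betw (row_source ss (Suc j)) ?A ?A"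
    by (rule bij_betw_cong) (simp add: src_pos_def)
  have c2: "bij_betw (src_pos ss j) ?B ?B \<longleftrightarrow> bij_betw id ?B ?B"
    by (rule bij_betw_cong) (simp add: src_pos_def)
  have b1: "bij_betw (src_pos ss j) ?A ?A" using c1 assms by blast
  have b2: "bij_betw (src_pos ss j) ?B ?B" using c2 by simp
  have d: "?A \<inter> ?B = {}" by auto
  have "bij_betw (\<lambda>x. if x \<in> ?A then src_pos ss j x else src_pos ss j x) (?A \<union> ?B) (?A \<union> ?B)"
    by (rule bij_betw_disjoint_Un[OF b1 b2 d d])
  then show ?thesis unfolding e by simp
qed

lemma bij_betw_row_source:
  assumes "ss \<in> perm_families"
  shows "bij_betw (row_source ss j) {..<col_height j} {..<col_height j}"
proof (cases "j \<le> N")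
  case True
  then show ?thesis
  proof (induction j rule: inc_induct)
    case base
    then show ?case using col_height_eq_0 by (simp add: bij_betw_def)
  next
    case (step n)
    have perm: "ss n \<in> perm_lists (col_height n)"
      using assms step(2) unfolding perm_families_def col_perms_def by auto
    have "bij_betw ((!) (ss n) \<circ> src_pos ss n) {..<col_height n} {..<col_height n}"
      using bij_betw_src_pos_of_row_source[OF step(3)] bij_betw_nth_perm_lists[OF perm]
      by (rule bij_betw_trans)
    then show ?case by (rule bij_betw_cong[THEN iffD1, rotated]) (simp add: row_source_eq_nth)
  qed
next
  case False
  then show ?thesis using col_height_eq_0 by (simp add: bij_betw_def)
qed

lemma bij_betw_src_pos:
  "ss \<in> perm_families \<Longrightarrow> bij_betw (src_pos ss j) {..<col_height j} {..<col_height j}"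
  using bij_betw_src_pos_of_row_source bij_betw_row_source by blast

lemma row_source_less: "ss \<in> perm_families \<Longrightarrow> i < col_height j \<Longrightarrow> row_source ss j i < col_height j"
  using bij_betw_row_source bij_betwE by blast

definition filling :: "(nat \<Rightarrow> nat list) \<Rightarrow> box \<Rightarrow> nat" where
  "filling ss = (\<lambda>(i, j). if (i, j) \<in> boxes la then T (row_source ss j i, j) else 0)"

lemma image_column_row_source:
  assumes "ss \<in> perm_families"
  shows "(\<lambda>(i, j). (row_source ss j i, j)) ` column j = column j"
proof -
  have "(\<lambda>(i, j). (row_source ss j i, j)) ` column j
      = (\<lambda>i. (i, j)) ` (row_source ss j ` {..<col_height j})"
    unfolding column_eq image_image by simp
  also have "row_source ss j ` {..<col_height j} = {..<col_height j}"
    using bij_betw_row_source[OF assms] bij_betw_imp_surj_on by blast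
  finally show ?thesis unfolding column_eq .
qed

lemma bij_betw_boxes_row_source:
  assumes ss: "ss \<in> perm_families"
  shows "bij_betw (\<lambda>(i, j). (row_source ss j i, j)) (boxes la) (boxes la)"
proof (rule bij_betw_imageI)
  show "inj_on (\<lambda>(i, j). (row_source ss j i, j)) (boxes la)"
    using bij_betw_row_source[OF ss] mem_boxes_iff unfolding bij_betw_def inj_on_def by auto
  have "boxes la = (\<Union>j. column j)" unfolding column_def by auto
  then show "(\<lambda>(i, j). (row_source ss j i, j)) ` boxes la = boxes la"
    using image_column_row_source[OF ss] by (simp add: image_UN)
qed

lemma filling_eq_on_boxes:
  "c \<in> boxes la \<Longrightarrow> filling ss c = (T \<circ> (\<lambda>(i, j). (row_source ss j i, j))) c"
  unfolding filling_def by (cases c) auto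

lemma filling_row_less:
  assumes ss: "ss \<in> perm_families" and i: "i < col_height (Suc j)"
  shows "filling ss (i, j) < filling ss (i, Suc j)"
proof -
  have "j < N" using less_N_if_col_height_pos[of "Suc j"] i by simp
  then have "ss j \<in> col_perms j" using ss unfolding perm_families_def by auto
  moreover have "row_source ss (Suc j) i < col_height (Suc j)" using row_source_less[OF ss i] .
  ultimately have "T (ss j ! row_source ss (Suc j) i, j) < T (row_source ss (Suc j) i, Suc j)"
    unfolding col_perms_def by auto
  moreover have "i < col_height j" using i col_height_Suc_le[of j] by simp
  ultimately show ?thesis
    unfolding filling_def using i mem_boxes_iff row_source_eq_nth[of ss j i]
    by (simp add: src_pos_def)
qed

lemma filling_mem_fibre:
  assumes ss: "ss \<in> perm_families"
  shows "filling ss \<in> fibre"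
proof -
  have rs: "row_standard la (filling ss)"
    unfolding row_standard_def
  proof (intro conjI allI impI)
    show "bij_betw (filling ss) (boxes la) {1..sum_list la}"
      using bij_betw_trans[OF bij_betw_boxes_row_source[OF ss] bij_betw_T]
      by (rule bij_betw_cong[THEN iffD1, rotated]) (simp add: filling_eq_on_boxes)
  next
    fix c assume "c \<notin> boxes la" then show "filling ss c = 0" unfolding filling_def by (cases c) auto
  next
    fix i j assume "(i, Suc j) \<in> boxes la"
    then show "filling ss (i, j) < filling ss (i, Suc j)"
      using filling_row_less[OF ss] mem_boxes_iff by simp
  qed
  have "filling ss ` column j = T ` column j" for j
  proof -
    have "filling ss ` column j = (T \<circ> (\<lambda>(i, j). (row_source ss j i, j))) ` column j"
      by (rule image_cong) (auto simp: column_def filling_eq_on_boxes)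
    then show ?thesis unfolding image_comp[symmetric] image_column_row_source[OF ss] .
  qed
  then show ?thesis using st_eq_T_iff[OF rs] rs unfolding fibre_def by simp
qed

lemma inj_on_filling: "inj_on filling perm_families"
proof (rule inj_onI)
  fix ss ss' assume ss: "ss \<in> perm_families" and ss': "ss' \<in> perm_families"
    and eq: "filling ss = filling ss'"
  have R: "row_source ss j i = row_source ss' j i" if i: "i < col_height j" for j i
  proof -
    have b: "(i, j) \<in> boxes la" using i mem_boxes_iff by simp
    have "T (row_source ss j i, j) = T (row_source ss' j i, j)"
      using fun_cong[OF eq, of "(i, j)"] b unfolding filling_def by simp
    moreover have "(row_source ss j i, j) \<in> boxes la" "(row_source ss' j i, j) \<in> boxes la"
      using row_source_less[OF ss i] row_source_less[OF ss' i] mem_boxes_iff by auto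
    ultimately show ?thesis using inj_on_T by (auto dest: inj_onD)
  qed
  have P: "src_pos ss j i = src_pos ss' j i" if "i < col_height j" for j i
    unfolding src_pos_def using R by simp
  show "ss = ss'"
  proof (rule PiE_ext[OF ss[unfolded perm_families_def] ss'[unfolded perm_families_def]])
    fix j assume j: "j \<in> {..<N}"
    have "ss j \<in> col_perms j" "ss' j \<in> col_perms j"
      using ss ss' j unfolding perm_families_def by (auto intro: PiE_mem)
    then have l: "length (ss j) = col_height j" "length (ss' j) = col_height j"
      using length_perm_lists unfolding col_perms_def by auto
    show "ss j = ss' j"
    proof (rule nth_equalityI)
      show "length (ss j) = length (ss' j)" using l by simp
    next
      fix k assume "k < length (ss j)"
      then have k: "k < col_height j" using l by simp
      obtain x where x: "x < col_height j" "src_pos ss j x = k"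
        using bij_betw_src_pos[OF ss, of j] k by (metis bij_betw_iff_bijections lessThan_iff)
      have "ss j ! k = row_source ss j x" using x row_source_eq_nth by simp
      also have "\<dots> = row_source ss' j x" using R x by simp
      also have "\<dots> = ss' j ! k" using x P row_source_eq_nth by simp
      finally show "ss j ! k = ss' j ! k" .
    qed
  qed
qed

definition T_row_of :: "(box \<Rightarrow> nat) \<Rightarrow> nat \<Rightarrow> nat \<Rightarrow> nat" where
  "T_row_of \<tau> j i = fst (inv_into (boxes la) T (\<tau> (i, j)))"

definition right_row :: "(box \<Rightarrow> nat) \<Rightarrow> nat \<Rightarrow> nat \<Rightarrow> nat" where
  "right_row \<tau> j k =
     (if k < col_height (Suc j) then fst (inv_into (boxes la) \<tau> (T (k, Suc j))) else k)"

definition encode :: "(box \<Rightarrow> nat) \<Rightarrow> nat \<Rightarrow> nat list" where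
  "encode \<tau> =
     (\<lambda>j. if j < N then map (\<lambda>k. T_row_of \<tau> j (right_row \<tau> j k)) [0..<col_height j] else undefined)"

lemma T_row_of_correct:
  assumes t: "\<tau> \<in> fibre" and i: "i < col_height j"
  shows "T_row_of \<tau> j i < col_height j \<and> T (T_row_of \<tau> j i, j) = \<tau> (i, j)"
proof -
  have "\<tau> (i, j) \<in> \<tau> ` column j" using i unfolding column_eq by auto
  then obtain i' where i': "i' < col_height j" "\<tau> (i, j) = T (i', j)"
    using fibre_column[OF t] unfolding column_eq by auto
  have "inv_into (boxes la) T (T (i', j)) = (i', j)"
    using i' mem_boxes_iff by (intro inv_into_f_f[OF inj_on_T]) simp
  then show ?thesis unfolding T_row_of_def using i' by simp
qed

lemma right_row_correct:
  assumes t: "\<tau> \<in> fibre" and k: "k < col_height (Suc j)"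
  shows "right_row \<tau> j k < col_height (Suc j) \<and> \<tau> (right_row \<tau> j k, Suc j) = T (k, Suc j)"
proof -
  have "T (k, Suc j) \<in> T ` column (Suc j)" using k unfolding column_eq by auto
  then have "T (k, Suc j) \<in> \<tau> ` column (Suc j)" using fibre_column[OF t] by simp
  then obtain x where x: "x < col_height (Suc j)" "T (k, Suc j) = \<tau> (x, Suc j)"
    unfolding column_eq by auto
  have "inv_into (boxes la) \<tau> (\<tau> (x, Suc j)) = (x, Suc j)"
    using x mem_boxes_iff by (intro inv_into_f_f[OF inj_on_fibre[OF t]]) simp
  then show ?thesis unfolding right_row_def using x k by simp
qed

lemma right_row_less: "\<tau> \<in> fibre \<Longrightarrow> k < col_height j \<Longrightarrow> right_row \<tau> j k < col_height j"
  using right_row_correct col_height_Suc_le[of j] by (metis order.strict_trans2 right_row_def)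

lemma inj_on_T_row_of:
  assumes t: "\<tau> \<in> fibre"
  shows "inj_on (T_row_of \<tau> j) {..<col_height j}"
proof (rule inj_onI)
  fix i i' assume i: "i \<in> {..<col_height j}" and i': "i' \<in> {..<col_height j}"
    and eq: "T_row_of \<tau> j i = T_row_of \<tau> j i'"
  have "\<tau> (i, j) = \<tau> (i', j)"
    using T_row_of_correct[OF t, of i j] T_row_of_correct[OF t, of i' j] i i' eq by simp
  then show "i = i'" using inj_on_fibre[OF t] i i' mem_boxes_iff by (auto dest: inj_onD)
qed

lemma inj_on_right_row:
  assumes t: "\<tau> \<in> fibre"
  shows "inj_on (right_row \<tau> j) {..<col_height j}"
proof (rule inj_onI)
  fix k k' assume "k \<in> {..<col_height j}" "k' \<in> {..<col_height j}"
    and eq: "right_row \<tau> j k = right_row \<tau> j k'"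
  show "k = k'"
  proof (cases "k < col_height (Suc j)"; cases "k' < col_height (Suc j)")
    assume k: "k < col_height (Suc j)" and k': "k' < col_height (Suc j)"
    then have "T (k, Suc j) = T (k', Suc j)"
      using right_row_correct[OF t k] right_row_correct[OF t k'] eq by metis
    then show ?thesis using inj_on_T k k' mem_boxes_iff by (auto dest: inj_onD)
  next
    assume "k < col_height (Suc j)" "\<not> k' < col_height (Suc j)"
    then show ?thesis using right_row_correct[OF t, of k j] eq unfolding right_row_def by simp
  next
    assume "\<not> k < col_height (Suc j)" "k' < col_height (Suc j)"
    then show ?thesis using right_row_correct[OF t, of k' j] eq unfolding right_row_def by simp
  qed (use eq in \<open>simp add: right_row_def\<close>)
qed

lemma encode_mem_perm_families:
  assumes t: "\<tau> \<in> fibre"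
  shows "encode \<tau> \<in> perm_families"
  unfolding perm_families_def PiE_iff
proof (intro conjI ballI)
  show "encode \<tau> \<in> extensional {..<N}" unfolding encode_def extensional_def by simp
next
  fix j assume "j \<in> {..<N}"
  define f where "f = T_row_of \<tau> j \<circ> right_row \<tau> j"
  have enc: "encode \<tau> j = map f [0..<col_height j]"
    unfolding encode_def f_def using \<open>j \<in> {..<N}\<close> by simp
  have "f ` {..<col_height j} \<subseteq> {..<col_height j}"
  proof
    fix x assume "x \<in> f ` {..<col_height j}"
    then obtain k where "k < col_height j" "x = f k" by auto
    then show "x \<in> {..<col_height j}"
      unfolding f_def using T_row_of_correct[OF t right_row_less[OF t]] by simp
  qed
  moreover have "inj_on f {..<col_height j}"
  proof -
    have "right_row \<tau> j ` {..<col_height j} \<subseteq> {..<col_height j}"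
      using right_row_less[OF t] by auto
    then have "inj_on (T_row_of \<tau> j) (right_row \<tau> j ` {..<col_height j})"
      by (rule inj_on_subset[OF inj_on_T_row_of[OF t]])
    then show ?thesis unfolding f_def by (rule comp_inj_on[OF inj_on_right_row[OF t]])
  qed
  ultimately have "f ` {..<col_height j} = {..<col_height j}"
    by (intro endo_inj_surj) simp_all
  then have perm: "encode \<tau> j \<in> perm_lists (col_height j)"
    unfolding perm_lists_def enc using \<open>inj_on f {..<col_height j}\<close>
    by (simp add: distinct_map lessThan_atLeast0)
  have "T (encode \<tau> j ! k, j) < T (k, Suc j)" if k: "k < col_height (Suc j)" for k
  proof -
    have x: "right_row \<tau> j k < col_height (Suc j)" "\<tau> (right_row \<tau> j k, Suc j) = T (k, Suc j)"
      using right_row_correct[OF t k] by auto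
    have "k < col_height j" "right_row \<tau> j k < col_height j"
      using k x(1) col_height_Suc_le[of j] by simp_all
    then have "T (encode \<tau> j ! k, j) = \<tau> (right_row \<tau> j k, j)"
      unfolding enc f_def using T_row_of_correct[OF t, of "right_row \<tau> j k" j] by simp
    also have "\<dots> < \<tau> (right_row \<tau> j k, Suc j)"
      using t x(1) mem_boxes_iff unfolding fibre_def row_standard_def by simp
    finally show ?thesis using x(2) by simp
  qed
  then show "encode \<tau> j \<in> col_perms j" unfolding col_perms_def using perm by simp
qed

lemma right_row_T_row_of:
  assumes t: "\<tau> \<in> fibre" and i: "i < col_height (Suc j)"
  shows "right_row \<tau> j (T_row_of \<tau> (Suc j) i) = i"
proof -
  have "inv_into (boxes la) \<tau> (\<tau> (i, Suc j)) = (i, Suc j)"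
    using i mem_boxes_iff by (intro inv_into_f_f[OF inj_on_fibre[OF t]]) simp
  then show ?thesis unfolding right_row_def using T_row_of_correct[OF t i] by simp
qed

lemma row_source_encode:
  assumes t: "\<tau> \<in> fibre" and "i < col_height j"
  shows "row_source (encode \<tau>) j i = T_row_of \<tau> j i"
proof -
  have "j \<le> N" using less_N_if_col_height_pos[of j] \<open>i < col_height j\<close> by simp
  then have "\<forall>i<col_height j. row_source (encode \<tau>) j i = T_row_of \<tau> j i"
  proof (induction j rule: inc_induct)
    case base
    then show ?case using col_height_eq_0 by simp
  next
    case (step n)
    have enc: "encode \<tau> n ! k = T_row_of \<tau> n (right_row \<tau> n k)" if "k < col_height n" for k
      unfolding encode_def using step(2) that by simp
    show ?case
    proof (intro allI impI)
      fix i assume i: "i < col_height n"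
      show "row_source (encode \<tau>) n i = T_row_of \<tau> n i"
      proof (cases "i < col_height (Suc n)")
        case True
        then have "src_pos (encode \<tau>) n i = T_row_of \<tau> (Suc n) i"
          unfolding src_pos_def using step(3) by simp
        moreover have "T_row_of \<tau> (Suc n) i < col_height n"
          using T_row_of_correct[OF t True] col_height_Suc_le[of n] by simp
        ultimately show ?thesis
          unfolding row_source_eq_nth using enc right_row_T_row_of[OF t True] by simp
      next
        case False
        then show ?thesis
          unfolding row_source_eq_nth using enc i by (simp add: src_pos_def right_row_def)
      qed
    qed
  qed
  then show ?thesis using \<open>i < col_height j\<close> by simp
qed

lemma filling_encode:
  assumes t: "\<tau> \<in> fibre" shows "filling (encode \<tau>) = \<tau>"
proof
  fix c :: box
  obtain i j where c: "c = (i, j)" by (cases c)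
  show "filling (encode \<tau>) c = \<tau> c"
  proof (cases "c \<in> boxes la")
    case True
    then have i: "i < col_height j" using mem_boxes_iff c by simp
    show ?thesis
      unfolding filling_def c using True c row_source_encode[OF t i] T_row_of_correct[OF t i] by simp
  next
    case False
    then show ?thesis unfolding filling_def c using t c unfolding fibre_def row_standard_def by simp
  qed
qed

lemma bij_betw_filling: "bij_betw filling perm_families fibre"
  unfolding bij_betw_def
proof
  show "inj_on filling perm_families" by (rule inj_on_filling)
  show "filling ` perm_families = fibre"
  proof
    show "filling ` perm_families \<subseteq> fibre" using filling_mem_fibre by blast
    show "fibre \<subseteq> filling ` perm_families"
    proof
      fix \<tau> assume "\<tau> \<in> fibre"
      then show "\<tau> \<in> filling ` perm_families"
        using filling_encode encode_mem_perm_families by (metis image_eqI)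
    qed
  qed
qed

lemma filling_apply: "x < col_height j \<Longrightarrow> filling ss (x, j) = T (row_source ss j x, j)"
  unfolding filling_def using mem_boxes_iff by simp

lemma src_pos_less_iff:
  assumes ss: "ss \<in> perm_families" and "\<not> (x < col_height (Suc j) \<and> y < col_height (Suc j))"
  shows "src_pos ss j y < src_pos ss j x \<longleftrightarrow> y < x"
  using assms row_source_less[OF ss, of _ "Suc j"] unfolding src_pos_def
  by (cases "x < col_height (Suc j)"; cases "y < col_height (Suc j)") fastforce+

lemma inversion_pair_filling_iff:
  assumes ss: "ss \<in> perm_families" and x: "x < col_height j" and y: "y < col_height j"
  shows "inversion_pair la (filling ss) (x, j) (y, j) \<longleftrightarrow>
    row_source ss j x < row_source ss j y \<and> src_pos ss j y < src_pos ss j x"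
proof (cases "x = y")
  case False
  let ?t = "filling ss"
  have inj: "inj_on ?t (boxes la)" using filling_mem_fibre[OF ss] inj_on_fibre by blast
  have bx: "(x, j) \<in> boxes la" "(y, j) \<in> boxes la" using x y mem_boxes_iff by auto
  have lt: "?t (x, j) < ?t (y, j) \<longleftrightarrow> row_source ss j x < row_source ss j y"
    using filling_apply[OF x] filling_apply[OF y] T_col_less_iff
      row_source_less[OF ss x] row_source_less[OF ss y] by simp
  have "shift (x, j) 1 = (x, Suc j)" "shift (y, j) 1 = (y, Suc j)" unfolding shift_def by auto
  moreover have "first_diff la ?t (x, j) (y, j) = 1" using first_diff_eq_1[OF inj bx] False by simp
  \<comment> \<open>entries in one column are distinct, so the pair is decided by the boxes one step to the right\<close>
  ultimately have ip: "inversion_pair la ?t (x, j) (y, j) \<longleftrightarrow> row_source ss j x < row_source ss j y \<and>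
      ((\<not> (x < col_height (Suc j) \<and> y < col_height (Suc j)) \<and> y < x) \<or>
       (x < col_height (Suc j) \<and> y < col_height (Suc j) \<and> ?t (y, Suc j) < ?t (x, Suc j)))"
    unfolding inversion_pair_def Let_def using bx False lt mem_boxes_iff by auto
  show ?thesis
  proof (cases "x < col_height (Suc j) \<and> y < col_height (Suc j)")
    case True
    then have "?t (y, Suc j) < ?t (x, Suc j) \<longleftrightarrow> row_source ss (Suc j) y < row_source ss (Suc j) x"
      using filling_apply T_col_less_iff row_source_less[OF ss] by simp
    then show ?thesis using ip True unfolding src_pos_def by simp
  next
    case False
    then show ?thesis using ip src_pos_less_iff[OF ss False] by auto
  qed
qed (simp add: inversion_pair_def)

definition column_inversions :: "(nat \<Rightarrow> nat list) \<Rightarrow> nat \<Rightarrow> (box \<times> box) set" where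
  "column_inversions ss j = {((x, j), (y, j)) | x y. x < col_height j \<and> y < col_height j \<and>
     row_source ss j x < row_source ss j y \<and> src_pos ss j y < src_pos ss j x}"

lemma inversion_pairs_filling_eq:
  assumes ss: "ss \<in> perm_families"
  shows "{(c, c'). inversion_pair la (filling ss) c c'} = (\<Union>j<N. column_inversions ss j)"
proof (intro equalityI subsetI)
  fix p assume "p \<in> {(c, c'). inversion_pair la (filling ss) c c'}"
  then obtain x j y j' where
    p: "p = ((x, j), (y, j'))" "inversion_pair la (filling ss) (x, j) (y, j')"
    by (metis (no_types, lifting) case_prodE mem_Collect_eq surj_pair)
  then have "j' = j" "(x, j) \<in> boxes la" "(y, j) \<in> boxes la" unfolding inversion_pair_def by auto
  then have xy: "j' = j" "x < col_height j" "y < col_height j" using mem_boxes_iff by auto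
  then have "j < N" using less_N_if_col_height_pos by simp
  then show "p \<in> (\<Union>j<N. column_inversions ss j)"
    using p xy inversion_pair_filling_iff[OF ss xy(2,3)] unfolding column_inversions_def by blast
next
  fix p assume "p \<in> (\<Union>j<N. column_inversions ss j)"
  then show "p \<in> {(c, c'). inversion_pair la (filling ss) c c'}"
    unfolding column_inversions_def using inversion_pair_filling_iff[OF ss] by auto
qed

lemma card_column_inversions:
  assumes ss: "ss \<in> perm_families" and "j < N"
  shows "card (column_inversions ss j) = inversions (ss j)"
proof -
  let ?g = "\<lambda>((x::nat, j::nat), (y::nat, j'::nat)). (src_pos ss j y, src_pos ss j x)"
  have "ss j \<in> col_perms j" using ss \<open>j < N\<close> unfolding perm_families_def by auto
  then have len: "length (ss j) = col_height j"
    using length_perm_lists unfolding col_perms_def by auto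
  have bij: "bij_betw (src_pos ss j) {..<col_height j} {..<col_height j}"
    using bij_betw_src_pos[OF ss] .
  then have "inj_on ?g (column_inversions ss j)"
    unfolding column_inversions_def bij_betw_def inj_on_def by auto
  moreover have "?g ` column_inversions ss j = inv_pairs (ss j)"
  proof (intro equalityI subsetI)
    fix q assume "q \<in> ?g ` column_inversions ss j"
    then obtain x y where "q = (src_pos ss j y, src_pos ss j x)" "x < col_height j"
        "row_source ss j x < row_source ss j y" "src_pos ss j y < src_pos ss j x"
      unfolding column_inversions_def by auto
    then show "q \<in> inv_pairs (ss j)"
      unfolding inv_pairs_def using bij_betwE[OF bij] len row_source_eq_nth by auto
  next
    fix q assume "q \<in> inv_pairs (ss j)"
    then obtain a b where ab: "q = (a, b)" "a < b" "b < col_height j" "ss j ! b < ss j ! a"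
      using len unfolding inv_pairs_def by auto
    then have "a \<in> src_pos ss j ` {..<col_height j}" "b \<in> src_pos ss j ` {..<col_height j}"
      using bij_betw_imp_surj_on[OF bij] by auto
    then obtain x y where x: "x < col_height j" "src_pos ss j x = b"
      and y: "y < col_height j" "src_pos ss j y = a"
      by blast
    then have "((x, j), (y, j)) \<in> column_inversions ss j"
      unfolding column_inversions_def using ab row_source_eq_nth by auto
    then show "q \<in> ?g ` column_inversions ss j" using x y ab by force
  qed
  ultimately show ?thesis using card_image[of ?g "column_inversions ss j"]
    unfolding inversions_def by simp
qed

lemma inv_count_filling:
  assumes ss: "ss \<in> perm_families"
  shows "inv_count la (filling ss) = (\<Sum>j<N. inversions (ss j))"
proof -
  have "finite (column_inversions ss j)" for j
  proof (rule finite_subset)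
    show "column_inversions ss j \<subseteq> column j \<times> column j"
      unfolding column_inversions_def column_eq by auto
  qed (simp add: finite_column)
  moreover have "column_inversions ss i \<inter> column_inversions ss j = {}" if "i \<noteq> j" for i j
    using that unfolding column_inversions_def by auto
  ultimately have "card (\<Union>j<N. column_inversions ss j) = (\<Sum>j<N. card (column_inversions ss j))"
    by (intro card_UN_disjoint) auto
  then show ?thesis
    unfolding inv_count_def inversion_pairs_filling_eq[OF ss] using card_column_inversions[OF ss]
    by simp
qed

text \<open>The entry of column \<open>j\<close> left of \<open>T (k, Suc j)\<close> must be one of the \<open>col_bound j k\<close> smallest
  entries of that column; rows not reaching column \<open>Suc j\<close> are unconstrained.\<close>

definition col_bound :: "nat \<Rightarrow> nat \<Rightarrow> nat" where
  "col_bound j k = (if k < col_height (Suc j)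
     then card {m. m < col_height j \<and> T (m, j) < T (k, Suc j)} else col_height j)"

lemma T_col_less_iff_less_card:
  assumes "m < col_height j"
  shows "T (m, j) < b \<longleftrightarrow> m < card {m. m < col_height j \<and> T (m, j) < b}"
proof -
  have "{m. m < col_height j \<and> T (m, j) < b} = {..<card {m. m < col_height j \<and> T (m, j) < b}}"
  proof (rule Collect_downclosed_eq_lessThan)
    fix i i' assume "i' \<le> i" "i < col_height j \<and> T (i, j) < b"
    then show "i' < col_height j \<and> T (i', j) < b" using T_col_le[of i' i j] by simp
  qed simp
  then show ?thesis using assms by (metis (no_types, lifting) lessThan_iff mem_Collect_eq)
qed

lemma less_col_bound_iff:
  "m < col_height j \<Longrightarrow>
    m < col_bound j k \<longleftrightarrow> (k < col_height (Suc j) \<longrightarrow> T (m, j) < T (k, Suc j))"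
  unfolding col_bound_def using T_col_less_iff_less_card by simp

lemma col_perms_eq_bounded_perms: "col_perms j = bounded_perms (col_height j) (col_bound j)"
proof -
  have "(\<forall>k<col_height (Suc j). T (s ! k, j) < T (k, Suc j)) \<longleftrightarrow>
      (\<forall>k<col_height j. s ! k < col_bound j k)" if s: "s \<in> perm_lists (col_height j)" for s
  proof -
    have "s ! k < col_height j" if "k < col_height j" for k
      using s that length_perm_lists[OF s] nth_mem[of k s] unfolding perm_lists_def by auto
    then show ?thesis
      using less_col_bound_iff col_height_Suc_le[of j] by (auto intro: order.strict_trans2)
  qed
  then show ?thesis unfolding col_perms_def bounded_perms_def by blast
qed

lemma card_T_col_below_le: "card {m. m < col_height j \<and> T (m, j) < b} \<le> col_height j"
  using card_mono[of "{..<col_height j}" "{m. m < col_height j \<and> T (m, j) < b}"] by auto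

lemma col_bound_bounds: "\<forall>k<col_height j. k < col_bound j k \<and> col_bound j k \<le> col_height j"
proof (intro allI impI conjI)
  fix k assume k: "k < col_height j"
  show "col_bound j k \<le> col_height j" unfolding col_bound_def using card_T_col_below_le by simp
  show "k < col_bound j k"
  proof (cases "k < col_height (Suc j)")
    case True
    \<comment> \<open>the left neighbours of \<open>T (m, Suc j)\<close>, \<open>m \<le> k\<close>, are all below \<open>T (k, Suc j)\<close>\<close>
    have "{..k} \<subseteq> {m. m < col_height j \<and> T (m, j) < T (k, Suc j)}"
    proof
      fix m assume "m \<in> {..k}"
      then have m: "m \<le> k" by simp
      then have "T (m, j) < T (m, Suc j)" using True by (intro T_row_less) simp
      also have "\<dots> \<le> T (k, Suc j)" using T_col_le m True by simp
      finally show "m \<in> {m. m < col_height j \<and> T (m, j) < T (k, Suc j)}" using m k by simp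
    qed
    then have "card {..k} \<le> card {m. m < col_height j \<and> T (m, j) < T (k, Suc j)}"
      by (intro card_mono) simp_all
    then show ?thesis unfolding col_bound_def using True by simp
  qed (simp add: col_bound_def k)
qed

lemma mono_on_col_bound: "mono_on {..<col_height j} (col_bound j)"
proof (rule mono_onI)
  fix k k' assume "k \<in> {..<col_height j}" "k' \<in> {..<col_height j}" "k \<le> k'"
  show "col_bound j k \<le> col_bound j k'"
  proof (cases "k' < col_height (Suc j)")
    case True
    then have "T (k, Suc j) \<le> T (k', Suc j)" using T_col_le \<open>k \<le> k'\<close> by simp
    then have "{m. m < col_height j \<and> T (m, j) < T (k, Suc j)}
        \<subseteq> {m. m < col_height j \<and> T (m, j) < T (k', Suc j)}" by auto
    then show ?thesis unfolding col_bound_def using True \<open>k \<le> k'\<close> by (simp add: card_mono)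
  qed (simp add: col_bound_def card_T_col_below_le)
qed

lemma gen_poly_col_perms:
  "gen_poly (col_perms j) inversions = (\<Prod>k<col_height j. q_int (col_bound j k - k))"
  unfolding col_perms_eq_bounded_perms
  by (rule gen_poly_bounded_perms[OF col_bound_bounds mono_on_col_bound])

lemma finite_col_perms: "finite (col_perms j)"
  unfolding col_perms_eq_bounded_perms by (rule finite_bounded_perms)

lemma finite_perm_families: "finite perm_families"
  unfolding perm_families_def by (rule finite_PiE) (simp_all add: finite_col_perms)

lemma gen_poly_fibre:
  "gen_poly fibre (inv_count la) =
     (\<Prod>(j, k)\<in>Sigma {..<N} (\<lambda>j. {..<col_height j}). q_int (col_bound j k - k))"
proof -
  have "gen_poly fibre (inv_count la) = gen_poly perm_families (\<lambda>ss. \<Sum>j\<in>{..<N}. inversions (ss j))"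
    by (rule gen_poly_reindex[OF bij_betw_filling]) (simp add: inv_count_filling)
  also have "\<dots> = (\<Prod>j<N. gen_poly (col_perms j) inversions)"
    unfolding perm_families_def by (rule gen_poly_PiE) (simp_all add: finite_col_perms)
  also have "\<dots> = (\<Prod>(j, k)\<in>Sigma {..<N} (\<lambda>j. {..<col_height j}). q_int (col_bound j k - k))"
    by (simp add: gen_poly_col_perms prod.Sigma)
  finally show ?thesis .
qed

lemma log_concave_fibre: "log_concave (int_coeff (gen_poly fibre (inv_count la)))"
proof -
  let ?I = "Sigma {..<N} (\<lambda>j. {..<col_height j})"
  have "\<forall>p\<in>?I. 0 < col_bound (fst p) (snd p) - snd p" using col_bound_bounds by auto
  then have "log_concave (int_coeff (\<Prod>p\<in>?I. q_int (col_bound (fst p) (snd p) - snd p)))"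
    by (intro log_concave_int_coeff_prod_q_int[THEN conjunct1]) auto
  then show ?thesis unfolding gen_poly_fibre by (simp add: case_prod_beta)
qed

lemma card_S_k_T_eq_int_coeff:
  "card (S_k_T la k T) = int_coeff (gen_poly fibre (inv_count la)) (int k)"
proof -
  have "finite fibre" using bij_betw_filling finite_perm_families bij_betw_finite by blast
  moreover have "S_k_T la k T = {\<tau> \<in> fibre. inv_count la \<tau> = k}"
    unfolding S_k_T_def S_k_def fibre_def by auto
  ultimately show ?thesis unfolding int_coeff_def by (simp add: coeff_gen_poly)
qed

end

theorem mainTheorem7:
  fixes la :: "nat list" and T :: "box \<Rightarrow> nat" and k :: nat
  assumes "is_shape la" and "standard la T" and "1 \<le> k"
  shows "card (S_k_T la (k - 1) T) * card (S_k_T la (k + 1) T) \<le> (card (S_k_T la k T))^2"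
proof -
  interpret standard_tableau la T using assms(1,2) by unfold_locales
  let ?c = "int_coeff (gen_poly fibre (inv_count la))"
  have "?c (int k - 1) * ?c (int k + 1) \<le> ?c (int k) * ?c (int k)"
    using log_concave_fibre unfolding log_concave_def by blast
  moreover have "?c (int k - 1) = card (S_k_T la (k - 1) T)"
    using assms(3) by (simp add: card_S_k_T_eq_int_coeff of_nat_diff)
  moreover have "?c (int k + 1) = card (S_k_T la (k + 1) T)"
    by (simp add: card_S_k_T_eq_int_coeff add.commute)
  ultimately show ?thesis by (simp add: card_S_k_T_eq_int_coeff power2_eq_square)
qed

end
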